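(* Let $B=(T,D,\lambda)$ be an upwards closed quasi-bush containing no coat hangers and let $w\in V(T)$. Then every node $v\in\mathrm{OUT}(w,B)$ with $v\neq w$ is a child of $w$ in $T$.
   Context: A quasi-bush $B=(T,D,\lambda)$: a rooted tree $T$, a set $D$ of pointers from leaves of $T$ to nodes of $T$ (every leaf points to the root), and $\lambda\colon D\to\{0,1\}$. $v\le_T w$ means $v$ is an ancestor of $w$ (including $v=w$); $T(a)$ is the subtree of descendants of $a$. $G(B)$ is the directed graph on the leaves of $T$ where, for distinct leaves $u,v$ and $w$ the lowest ancestor of $v$ with $(u,w)\in D$, $(u,v)$ is an arc iff $\lambda((u,w))=1$; this $w$ is the connection point of $(u,v)$. $B$ is upwards closed if $(u,w)\in D$ and $w'\le_T w$ imply $(u,w')\in D$. A coat hanger is a subtree $T(a)$ such that $a$ is not the root, $a$ is not a leaf, and there is a leaf $v$ with $(v,p)\in D$, $\lambda((v,p))=1$ for the parent $p$ of $a$, and $v$ has no pointer to any node of $T(a)$. $\mathrm{OUT}(w,B)$ is the set of all $v$ such that $w$ is the connection point of some arc $(u,v)$ of $G(B)$. *)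

theory Defs
  imports Main
begin

definition rooted_tree :: "'a set \<Rightarrow> 'a \<Rightarrow> ('a \<Rightarrow> 'a) \<Rightarrow> bool" where
  "rooted_tree V r par \<longleftrightarrow> finite V \<and> r \<in> V \<and> par r = r \<and>
     (\<forall>v\<in>V. v \<noteq> r \<longrightarrow> par v \<in> V \<and> (\<exists>n. (par ^^ n) v = r))"

text \<open>anc V par v w: v is an ancestor of w (v \<le>_T w), including v = w.\<close>
definition anc :: "'a set \<Rightarrow> ('a \<Rightarrow> 'a) \<Rightarrow> 'a \<Rightarrow> 'a \<Rightarrow> bool" where
  "anc V par v w \<longleftrightarrow> w \<in> V \<and> (\<exists>n. (par ^^ n) w = v)"

definition is_child :: "'a set \<Rightarrow> 'a \<Rightarrow> ('a \<Rightarrow> 'a) \<Rightarrow> 'a \<Rightarrow> 'a \<Rightarrow> bool" where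
  "is_child V r par c w \<longleftrightarrow> c \<in> V \<and> c \<noteq> r \<and> par c = w"

definition is_leaf :: "'a set \<Rightarrow> 'a \<Rightarrow> ('a \<Rightarrow> 'a) \<Rightarrow> 'a \<Rightarrow> bool" where
  "is_leaf V r par v \<longleftrightarrow> v \<in> V \<and> \<not> (\<exists>c. is_child V r par c v)"

definition subtree :: "'a set \<Rightarrow> ('a \<Rightarrow> 'a) \<Rightarrow> 'a \<Rightarrow> 'a set" where
  "subtree V par a = {x. anc V par a x}"

text \<open>Quasi-bush (T, D, lambda): labels 0/1 are encoded as False/True.\<close>
definition quasi_bush :: "'a set \<Rightarrow> 'a \<Rightarrow> ('a \<Rightarrow> 'a) \<Rightarrow> ('a \<times> 'a) set \<Rightarrow> ('a \<times> 'a \<Rightarrow> bool) \<Rightarrow> bool" where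
  "quasi_bush V r par D lam \<longleftrightarrow> rooted_tree V r par \<and>
     (\<forall>(u, w)\<in>D. is_leaf V r par u \<and> w \<in> V) \<and>
     (\<forall>u. is_leaf V r par u \<longrightarrow> (u, r) \<in> D)"

definition conn_point :: "'a set \<Rightarrow> 'a \<Rightarrow> ('a \<Rightarrow> 'a) \<Rightarrow> ('a \<times> 'a) set \<Rightarrow> 'a \<Rightarrow> 'a \<Rightarrow> 'a \<Rightarrow> bool" where
  "conn_point V r par D u v w \<longleftrightarrow> anc V par w v \<and> (u, w) \<in> D \<and>
     (\<forall>w'. anc V par w' v \<and> (u, w') \<in> D \<longrightarrow> anc V par w' w)"

definition arc :: "'a set \<Rightarrow> 'a \<Rightarrow> ('a \<Rightarrow> 'a) \<Rightarrow> ('a \<times> 'a) set \<Rightarrow> ('a \<times> 'a \<Rightarrow> bool) \<Rightarrow> 'a \<Rightarrow> 'a \<Rightarrow> bool" where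
  "arc V r par D lam u v \<longleftrightarrow> is_leaf V r par u \<and> is_leaf V r par v \<and> u \<noteq> v \<and>
     (\<exists>w. conn_point V r par D u v w \<and> lam (u, w))"

definition upwards_closed :: "'a set \<Rightarrow> ('a \<Rightarrow> 'a) \<Rightarrow> ('a \<times> 'a) set \<Rightarrow> bool" where
  "upwards_closed V par D \<longleftrightarrow> (\<forall>u w w'. (u, w) \<in> D \<and> anc V par w' w \<longrightarrow> (u, w') \<in> D)"

definition coat_hanger :: "'a set \<Rightarrow> 'a \<Rightarrow> ('a \<Rightarrow> 'a) \<Rightarrow> ('a \<times> 'a) set \<Rightarrow> ('a \<times> 'a \<Rightarrow> bool) \<Rightarrow> 'a \<Rightarrow> bool" where
  "coat_hanger V r par D lam a \<longleftrightarrow> a \<in> V \<and> a \<noteq> r \<and> \<not> is_leaf V r par a \<and>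
     (\<exists>v. is_leaf V r par v \<and> (v, par a) \<in> D \<and> lam (v, par a) \<and>
          (\<forall>x\<in>subtree V par a. (v, x) \<notin> D))"

definition OUT :: "'a set \<Rightarrow> 'a \<Rightarrow> ('a \<Rightarrow> 'a) \<Rightarrow> ('a \<times> 'a) set \<Rightarrow> ('a \<times> 'a \<Rightarrow> bool) \<Rightarrow> 'a \<Rightarrow> 'a set" where
  "OUT V r par D lam w = {v. \<exists>u. arc V r par D lam u v \<and> conn_point V r par D u v w}"

end

theory Submission
  imports Defs
begin

text \<open>Let u witness v \<in> OUT(w) and suppose v is not a child of w. Then the child a of w on the
  path to v is a proper ancestor of v, hence not a leaf. Since w is the lowest ancestor of v
  that u points to, u points neither to a nor, by upwards closure, into T(a); and u points to
  par a = w with label 1. So T(a) is a coat hanger.\<close>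

lemma rooted_tree_funpow_closed:
  "rooted_tree V r par \<Longrightarrow> x \<in> V \<Longrightarrow> (par ^^ n) x \<in> V"
  by (induction n) (auto simp: rooted_tree_def)

lemma rooted_tree_funpow_root:
  assumes "rooted_tree V r par"
  shows "(par ^^ n) r = r"
proof -
  have "(par ^^ 1) r = r" using assms by (simp add: rooted_tree_def)
  then show ?thesis using funpow_mod_eq[where f = par and n = 1 and x = r and m = n] by simp
qed

lemma rooted_tree_periodic_imp_root:
  assumes tree: "rooted_tree V r par" and "x \<in> V" and "k > 0" and period: "(par ^^ k) x = x"
  shows "x = r"
proof (rule ccontr)
  assume "x \<noteq> r"
  then obtain N where N: "(par ^^ N) x = r"
    using tree \<open>x \<in> V\<close> unfolding rooted_tree_def by blast
  define M where "M = N * k"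
  have "N \<le> M" using \<open>k > 0\<close> by (simp add: M_def)
  have "x = (par ^^ (M mod k)) x" by (simp add: M_def)
  also have "\<dots> = (par ^^ M) x" using funpow_mod_eq[OF period] .
  also have "\<dots> = (par ^^ (M - N + N)) x" using \<open>N \<le> M\<close> by simp
  also have "\<dots> = (par ^^ (M - N)) ((par ^^ N) x)" by (simp only: funpow_add comp_apply)
  also have "\<dots> = r" using N rooted_tree_funpow_root[OF tree] by simp
  finally show False using \<open>x \<noteq> r\<close> by simp
qed

lemma anc_antisym:
  assumes tree: "rooted_tree V r par" and "anc V par v w" and "anc V par w v"
  shows "v = w"
proof -
  obtain p q where p: "(par ^^ p) w = v" and q: "(par ^^ q) v = w" and "w \<in> V"
    using assms(2,3) unfolding anc_def by blast
  have cycle: "(par ^^ (q + p)) w = w" using p q by (simp add: funpow_add)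
  show ?thesis
  proof (cases "q + p = 0")
    case True
    then show ?thesis using p by simp
  next
    case False
    then have "w = r" using rooted_tree_periodic_imp_root[OF tree \<open>w \<in> V\<close> _ cycle] by simp
    then show ?thesis using p rooted_tree_funpow_root[OF tree] by simp
  qed
qed

lemma is_child_neq:
  assumes tree: "rooted_tree V r par" and "is_child V r par c a"
  shows "c \<noteq> a"
proof
  assume "c = a"
  with assms(2) have "(par ^^ 1) c = c" and "c \<in> V" and "c \<noteq> r"
    unfolding is_child_def by auto
  then show False using rooted_tree_periodic_imp_root[OF tree, of c 1] by simp
qed

lemma is_child_imp_anc:
  assumes "is_child V r par c a"
  shows "anc V par a c"
proof -
  have "(par ^^ 1) c = a" using assms by (simp add: is_child_def)
  then show ?thesis using assms unfolding anc_def is_child_def by blast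
qed

lemma anc_strict_obtain_child:
  assumes tree: "rooted_tree V r par" and "anc V par a v" and "v \<noteq> a"
  obtains c where "is_child V r par c a" and "anc V par c v"
proof -
  have "v \<in> V" and "\<exists>n. (par ^^ n) v = a" using assms(2) unfolding anc_def by auto
  define n where "n = (LEAST n. (par ^^ n) v = a)"
  have n: "(par ^^ n) v = a" unfolding n_def by (rule LeastI_ex) fact
  have shorter: "(par ^^ m) v \<noteq> a" if "m < n" for m
    using that not_less_Least unfolding n_def by blast
  obtain m where m: "n = Suc m" using n \<open>v \<noteq> a\<close> by (cases n) auto
  define c where "c = (par ^^ m) v"
  have "par c = a" using n m by (simp add: c_def)
  moreover have "c \<noteq> a" using shorter m by (simp add: c_def)
  moreover have "par r = r" using tree by (simp add: rooted_tree_def)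
  ultimately have "c \<noteq> r" by auto
  moreover have "c \<in> V" using rooted_tree_funpow_closed[OF tree \<open>v \<in> V\<close>] by (simp add: c_def)
  moreover have "anc V par c v" using \<open>v \<in> V\<close> by (auto simp: anc_def c_def)
  ultimately show thesis using that \<open>par c = a\<close> by (simp add: is_child_def)
qed

lemma anc_strict_not_leaf:
  "rooted_tree V r par \<Longrightarrow> anc V par a v \<Longrightarrow> v \<noteq> a \<Longrightarrow> \<not> is_leaf V r par a"
  by (metis anc_strict_obtain_child is_leaf_def)

lemma conn_point_unique:
  assumes "rooted_tree V r par"
    and "conn_point V r par D u v w" and "conn_point V r par D u v w'"
  shows "w = w'"
proof -
  have "anc V par w w'" and "anc V par w' w"
    using assms(2,3) unfolding conn_point_def by blast+
  then show ?thesis using anc_antisym[OF assms(1)] by blast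
qed

lemma arc_conn_point_label:
  assumes "rooted_tree V r par"
    and "arc V r par D lam u v" and "conn_point V r par D u v w"
  shows "lam (u, w)"
proof -
  obtain w' where "conn_point V r par D u v w'" and "lam (u, w')"
    using assms(2) unfolding arc_def by blast
  then show ?thesis using conn_point_unique[OF assms(1,3)] by simp
qed

lemma conn_point_no_pointer_below_child:
  assumes tree: "rooted_tree V r par" and closed: "upwards_closed V par D"
    and cp: "conn_point V r par D u v w"
    and child: "is_child V r par a w" and "anc V par a v"
    and "x \<in> subtree V par a"
  shows "(u, x) \<notin> D"
proof
  assume "(u, x) \<in> D"
  then have "(u, a) \<in> D"
    using closed \<open>x \<in> subtree V par a\<close> unfolding upwards_closed_def subtree_def by blast
  then have "anc V par a w" using cp \<open>anc V par a v\<close> unfolding conn_point_def by blast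
  then have "a = w" using anc_antisym[OF tree _ is_child_imp_anc[OF child]] by blast
  then show False using is_child_neq[OF tree child] by simp
qed

theorem lemma7p31:
  assumes "quasi_bush V r par D lam"
    and "upwards_closed V par D"
    and "\<not> (\<exists>a. coat_hanger V r par D lam a)"
    and "w \<in> V"
    and "v \<in> OUT V r par D lam w"
    and "v \<noteq> w"
  shows "is_child V r par v w"
proof -
  have tree: "rooted_tree V r par" using assms(1) unfolding quasi_bush_def by blast
  obtain u where arc: "arc V r par D lam u v" and cp: "conn_point V r par D u v w"
    using assms(5) unfolding OUT_def by blast
  have "anc V par w v" using cp unfolding conn_point_def by blast
  then obtain a where child: "is_child V r par a w" and "anc V par a v"
    using anc_strict_obtain_child[OF tree _ assms(6)] by blast
  show ?thesis
  proof (cases "v = a")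
    case False
    have "coat_hanger V r par D lam a"
      unfolding coat_hanger_def
    proof (intro conjI exI[of _ u])
      show "a \<in> V" "a \<noteq> r" using child unfolding is_child_def by auto
      show "\<not> is_leaf V r par a" using anc_strict_not_leaf[OF tree \<open>anc V par a v\<close> False] .
      show "is_leaf V r par u" using arc unfolding arc_def by blast
      have "par a = w" using child by (simp add: is_child_def)
      then show "(u, par a) \<in> D" "lam (u, par a)"
        using cp arc_conn_point_label[OF tree arc cp] by (simp_all add: conn_point_def)
      show "\<forall>x\<in>subtree V par a. (u, x) \<notin> D"
        using conn_point_no_pointer_below_child[OF tree assms(2) cp child \<open>anc V par a v\<close>] by blast
    qed
    with assms(3) show ?thesis by blast
  next
    case True
    with child show ?thesis by simp
  qed
qed

end
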